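(* Let $\Gamma$ be a $q$-connected finite simple graph on $n$ vertices ($q\ge1$). Then $\zeta_\alpha(\Gamma)=0$ for every composition $\alpha=(a_1,\dots,a_k)\models n$ such that $a_j>1$ for some $j>k-q$. In particular, if $\Gamma$ is connected then $\zeta_\alpha(\Gamma)=0$ whenever the last part of $\alpha$ exceeds $1$.
   Context: A graph is $q$-connected if it has more than $q$ vertices and remains connected after deleting any set of fewer than $q$ vertices. For a coloring $\lambda:V\to\mathbb{N}$ of a finite simple graph $\Gamma$ with values $i_1<\dots<i_k$, let $I_j=\lambda^{-1}(\{i_1,\dots,i_j\})$, $I_0=\emptyset$. It is ordered if for each $j$, no two distinct vertices $u,w$ with $\lambda(u)=\lambda(w)=i_j$ are joined by a path in $\Gamma$ (possibly a single edge) all of whose internal vertices lie in $I_{j-1}$. Its type is $(|\lambda^{-1}(i_1)|,\dots,|\lambda^{-1}(i_k)|)$. For a composition $\alpha$ of $n$ with $k(\alpha)$ parts, $\zeta_\alpha(\Gamma)$ is the number of surjective ordered colorings $\lambda:V\to\{1,\dots,k(\alpha)\}$ of type $\alpha$. *)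

theory Defs
  imports Main "HOL-Library.FuncSet"
begin

definition simple_graph :: "'a set \<Rightarrow> ('a \<Rightarrow> 'a \<Rightarrow> bool) \<Rightarrow> bool" where
  "simple_graph V E \<longleftrightarrow> finite V \<and>
     (\<forall>u v. E u v \<longrightarrow> u \<in> V \<and> v \<in> V \<and> u \<noteq> v \<and> E v u)"

definition is_path :: "('a \<Rightarrow> 'a \<Rightarrow> bool) \<Rightarrow> 'a \<Rightarrow> 'a list \<Rightarrow> 'a \<Rightarrow> bool" where
  "is_path E u xs w \<longleftrightarrow> distinct (u # xs @ [w]) \<and>
     (\<forall>i < length (u # xs). E ((u # xs @ [w]) ! i) ((u # xs @ [w]) ! Suc i))"

definition joined_through :: "('a \<Rightarrow> 'a \<Rightarrow> bool) \<Rightarrow> 'a set \<Rightarrow> 'a \<Rightarrow> 'a \<Rightarrow> bool" where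
  "joined_through E S u w \<longleftrightarrow> (\<exists>xs. set xs \<subseteq> S \<and> is_path E u xs w)"

definition connected_on :: "'a set \<Rightarrow> ('a \<Rightarrow> 'a \<Rightarrow> bool) \<Rightarrow> bool" where
  "connected_on W E \<longleftrightarrow> (\<forall>u\<in>W. \<forall>w\<in>W. u \<noteq> w \<longrightarrow> joined_through E W u w)"

definition q_connected :: "nat \<Rightarrow> 'a set \<Rightarrow> ('a \<Rightarrow> 'a \<Rightarrow> bool) \<Rightarrow> bool" where
  "q_connected q V E \<longleftrightarrow> card V > q \<and>
     (\<forall>S \<subseteq> V. card S < q \<longrightarrow> connected_on (V - S) E)"

definition ordered_coloring :: "'a set \<Rightarrow> ('a \<Rightarrow> 'a \<Rightarrow> bool) \<Rightarrow> ('a \<Rightarrow> nat) \<Rightarrow> bool" where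
  "ordered_coloring V E f \<longleftrightarrow>
     (\<forall>u\<in>V. \<forall>w\<in>V. u \<noteq> w \<and> f u = f w \<longrightarrow>
        \<not> joined_through E {v\<in>V. f v < f u} u w)"

definition composition :: "nat list \<Rightarrow> nat \<Rightarrow> bool" where
  "composition \<alpha> n \<longleftrightarrow> (\<forall>a\<in>set \<alpha>. 0 < a) \<and> sum_list \<alpha> = n"

definition zeta :: "nat list \<Rightarrow> 'a set \<Rightarrow> ('a \<Rightarrow> 'a \<Rightarrow> bool) \<Rightarrow> nat" where
  "zeta \<alpha> V E = card {f \<in> V \<rightarrow>\<^sub>E {1..length \<alpha>}.
      f ` V = {1..length \<alpha>} \<and> ordered_coloring V E f \<and>
      (\<forall>j\<in>{1..length \<alpha>}. card {v\<in>V. f v = j} = \<alpha> ! (j - 1))}"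

end

theory Submission
  imports Defs
begin

(* Let f be an ordered colouring with colours 1..k.  If the sublevel
   set {v. f v \<le> d} induces a connected subgraph, then colour d occurs at most once:
   a path inside the sublevel set between two vertices of colour d, cut at the first
   internal vertex of colour d, joins two distinct vertices of colour d through
   vertices of smaller colour, which ordered colourings forbid.
   In a q-connected graph, deleting fewer than q vertices leaves a connected graph.
   By downward induction on the colour, the top t < q colour classes of a surjective
   ordered colouring are therefore singletons: deleting the t vertices above colour
   k - t leaves the connected sublevel set of k - t.  Hence no colouring of type
   (a_1,...,a_k) with a_j > 1 for some j > k - q exists, i.e. zeta vanishes.
   The connected case is the case q = 1, since a connected graph on at least two
   vertices is 1-connected and a composition with last part > 1 forces card V \<ge> 2. *)

lemma is_path_prefix:
  assumes "is_path E u xs w" "i < length xs"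
  shows "is_path E u (take i xs) (xs ! i)"
proof -
  let ?L = "u # xs @ [w]"
  have prefix: "u # take i xs @ [xs ! i] = take (Suc (Suc i)) ?L"
    using assms(2) by (simp add: take_Suc_conv_app_nth)
  have dist: "distinct ?L" and adj: "\<forall>m < length (u # xs). E (?L ! m) (?L ! Suc m)"
    using assms(1) unfolding is_path_def by auto
  show ?thesis
    unfolding is_path_def prefix
  proof (intro conjI allI impI)
    show "distinct (take (Suc (Suc i)) ?L)" using dist by (rule distinct_take)
    fix m assume "m < length (u # take i xs)"
    hence m: "m < Suc i" using assms(2) by simp
    have "E (?L ! m) (?L ! Suc m)" using adj m assms(2) by simp
    moreover have "take (Suc (Suc i)) ?L ! m = ?L ! m" "take (Suc (Suc i)) ?L ! Suc m = ?L ! Suc m"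
      using m by (intro nth_take, simp)+
    ultimately show "E (take (Suc (Suc i)) ?L ! m) (take (Suc (Suc i)) ?L ! Suc m)" by simp
  qed
qed

lemma joined_through_first_hit:
  assumes "joined_through E S u w"
  shows "joined_through E {x\<in>S. \<not> P x} u w \<or>
         (\<exists>x\<in>S. P x \<and> x \<noteq> u \<and> joined_through E {x\<in>S. \<not> P x} u x)"
proof -
  obtain xs where xs_S: "set xs \<subseteq> S" and path: "is_path E u xs w"
    using assms unfolding joined_through_def by blast
  define i where "i = length (takeWhile (\<lambda>x. \<not> P x) xs)"
  have prefix: "take i xs = takeWhile (\<lambda>x. \<not> P x) xs"
    unfolding i_def by (metis takeWhile_eq_take)
  have prefix_avoids: "set (take i xs) \<subseteq> {x\<in>S. \<not> P x}"
    using xs_S prefix by (auto dest: set_takeWhileD in_set_takeD)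
  show ?thesis
  proof (cases "i < length xs")
    case False
    hence "take i xs = xs" by simp
    thus ?thesis using prefix_avoids path unfolding joined_through_def by auto
  next
    case True
    have "P (xs ! i)" using nth_length_takeWhile[OF True[unfolded i_def]] i_def by simp
    moreover have "xs ! i \<in> S" using True xs_S by auto
    moreover have sub: "is_path E u (take i xs) (xs ! i)" using is_path_prefix[OF path True] .
    moreover have "xs ! i \<noteq> u" using sub unfolding is_path_def by auto
    ultimately show ?thesis using prefix_avoids unfolding joined_through_def by blast
  qed
qed

lemma ordered_coloring_unique_at_connected_level:
  assumes ordered: "ordered_coloring V E f"
    and conn: "connected_on {v\<in>V. f v \<le> d} E"
    and "u \<in> V" "w \<in> V" "f u = d" "f w = d"
  shows "u = w"
proof (rule ccontr)
  assume "u \<noteq> w"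
  let ?S = "{v\<in>V. f v \<le> d}"
  have below: "{x\<in>?S. \<not> d \<le> f x} = {v\<in>V. f v < f u}" using \<open>f u = d\<close> by auto
  have forbidden: "\<not> joined_through E {v\<in>V. f v < f u} u x" if "x \<in> V" "f x = d" "x \<noteq> u" for x
    using ordered[unfolded ordered_coloring_def, rule_format, of u x] that \<open>u \<in> V\<close> \<open>f u = d\<close>
    by simp
  have "joined_through E ?S u w"
    using conn \<open>u \<noteq> w\<close> assms(3-6) unfolding connected_on_def by auto
  from joined_through_first_hit[OF this, of "\<lambda>x. d \<le> f x", unfolded below]
  have "joined_through E {v\<in>V. f v < f u} u w \<or>
      (\<exists>x\<in>?S. d \<le> f x \<and> x \<noteq> u \<and> joined_through E {v\<in>V. f v < f u} u x)" .
  thus False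
  proof
    assume "joined_through E {v\<in>V. f v < f u} u w"
    thus False using forbidden[OF assms(4,6)] \<open>u \<noteq> w\<close> by blast
  next
    assume "\<exists>x\<in>?S. d \<le> f x \<and> x \<noteq> u \<and> joined_through E {v\<in>V. f v < f u} u x"
    then obtain x where "x \<in> ?S" "d \<le> f x" "x \<noteq> u" "joined_through E {v\<in>V. f v < f u} u x"
      by blast
    moreover from this have "x \<in> V" "f x = d" by simp_all
    ultimately show False using forbidden by simp
  qed
qed

lemma q_connected_finite: "q_connected q V E \<Longrightarrow> finite V"
  unfolding q_connected_def by (metis card.infinite not_less0)

lemma q_connected_sublevel_connected:
  fixes f :: "'a \<Rightarrow> 'b::linorder"
  assumes "q_connected q V E" "card {v\<in>V. d < f v} < q"
  shows "connected_on {v\<in>V. f v \<le> d} E"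
proof -
  have "\<forall>S\<subseteq>V. card S < q \<longrightarrow> connected_on (V - S) E"
    using assms(1) unfolding q_connected_def by (rule conjunct2)
  moreover have "{v\<in>V. d < f v} \<subseteq> V" by blast
  ultimately have "connected_on (V - {v\<in>V. d < f v}) E" using assms(2) by blast
  moreover have "V - {v\<in>V. d < f v} = {v\<in>V. f v \<le> d}" by auto
  ultimately show ?thesis by simp
qed

text \<open>Downward induction: the sublevel set of colour k - t is connected.\<close>
lemma q_connected_top_classes_card:
  assumes qconn: "q_connected q V E" and ordered: "ordered_coloring V E f"
    and onto: "f ` V = {1..k}"
  shows "t < q \<Longrightarrow> t \<le> k \<Longrightarrow> card {v\<in>V. k - t < f v} = t"
proof (induction t)
  case 0
  have "f v \<le> k" if "v \<in> V" for v
    using that onto by (metis atLeastAtMost_iff image_eqI)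
  hence "{v\<in>V. k < f v} = {}" by (auto simp: not_less)
  thus ?case by (metis card.empty diff_zero)
next
  case (Suc t)
  define d where "d = k - t"
  have "finite V" using qconn by (rule q_connected_finite)
  have above: "card {v\<in>V. d < f v} = t" using Suc unfolding d_def by simp
  have "d \<in> f ` V" using Suc.prems onto unfolding d_def by auto
  then obtain x where x: "x \<in> V" "f x = d" by blast
  have "card {v\<in>V. d < f v} < q" using above Suc.prems by simp
  hence "connected_on {v\<in>V. f v \<le> d} E" by (rule q_connected_sublevel_connected[OF qconn])
  hence "{v\<in>V. f v = d} = {x}"
    using ordered_coloring_unique_at_connected_level[OF ordered] x by blast
  moreover have "{v\<in>V. k - Suc t < f v} = {v\<in>V. f v = d} \<union> {v\<in>V. d < f v}"
    using Suc.prems unfolding d_def by auto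
  ultimately show ?case using above x \<open>finite V\<close> by (simp add: card_insert_if)
qed

lemma q_connected_top_class_at_most_one:
  assumes qconn: "q_connected q V E" and ordered: "ordered_coloring V E f"
    and onto: "f ` V = {1..k}" and "d \<le> k" "k < d + q"
  shows "card {v\<in>V. f v = d} \<le> 1"
proof -
  have "card {v\<in>V. k - (k - d) < f v} = k - d"
    using q_connected_top_classes_card[OF qconn ordered onto, of "k - d"] assms(4,5) by simp
  hence "card {v\<in>V. d < f v} < q" using assms(4,5) by simp
  hence "connected_on {v\<in>V. f v \<le> d} E"
    by (rule q_connected_sublevel_connected[OF qconn])
  hence "\<forall>u\<in>{v\<in>V. f v = d}. \<forall>w\<in>{v\<in>V. f v = d}. u = w"
    using ordered_coloring_unique_at_connected_level[OF ordered] by blast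
  moreover have "finite V" using qconn by (rule q_connected_finite)
  ultimately show ?thesis by (simp add: card_le_Suc0_iff_eq)
qed

lemma zeta_nonzero_witness:
  assumes "zeta \<alpha> V E \<noteq> 0"
  obtains f where "f ` V = {1..length \<alpha>}" "ordered_coloring V E f"
    "\<forall>j\<in>{1..length \<alpha>}. card {v\<in>V. f v = j} = \<alpha> ! (j - 1)"
proof -
  let ?colourings = "{f \<in> V \<rightarrow>\<^sub>E {1..length \<alpha>}. f ` V = {1..length \<alpha>} \<and>
      ordered_coloring V E f \<and> (\<forall>j\<in>{1..length \<alpha>}. card {v\<in>V. f v = j} = \<alpha> ! (j - 1))}"
  have "?colourings \<noteq> {}" using assms unfolding zeta_def by (metis card.empty)
  thus ?thesis using that by blast
qed

text \<open>The general statement: zeta vanishes on q-connected graphs whenever one of the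
  last q parts of alpha exceeds 1 (here part j, counted from 0).\<close>
lemma q_connected_zeta_eq_0:
  assumes qconn: "q_connected q V E"
    and "j < length \<alpha>" "length \<alpha> < j + 1 + q" "\<alpha> ! j > 1"
  shows "zeta \<alpha> V E = 0"
proof (rule ccontr)
  assume "zeta \<alpha> V E \<noteq> 0"
  then obtain f where onto: "f ` V = {1..length \<alpha>}" and ordered: "ordered_coloring V E f"
    and type: "\<forall>j\<in>{1..length \<alpha>}. card {v\<in>V. f v = j} = \<alpha> ! (j - 1)"
    by (rule zeta_nonzero_witness)
  have "card {v\<in>V. f v = j + 1} = \<alpha> ! j" using type assms(2) by auto
  moreover have "card {v\<in>V. f v = j + 1} \<le> 1"
    using assms(2,3) by (intro q_connected_top_class_at_most_one[OF qconn ordered onto]) simp_all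
  ultimately show False using assms(4) by linarith
qed

lemma connected_imp_1_connected:
  assumes conn: "connected_on V E" and two: "1 < card V"
  shows "q_connected 1 V E"
  unfolding q_connected_def
proof (intro conjI allI impI)
  fix S assume "S \<subseteq> V" "card S < 1"
  moreover have "finite V" using two by (metis card.infinite not_less0)
  ultimately have "S = {}" by (metis card_0_eq finite_subset less_one)
  thus "connected_on (V - S) E" using conn by simp
qed (rule two)

lemma composition_last_gt_1:
  assumes "composition \<alpha> n" "\<alpha> \<noteq> []" "last \<alpha> > 1"
  shows "1 < n"
proof -
  have "last \<alpha> \<le> sum_list \<alpha>" using assms(2) by (intro member_le_sum_list) simp_all
  thus ?thesis using assms(1,3) unfolding composition_def by simp
qed

theorem mainTheorem11:
  fixes V :: "'a set" and E :: "'a \<Rightarrow> 'a \<Rightarrow> bool" and q :: nat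
  assumes "simple_graph V E"
  shows "(1 \<le> q \<and> q_connected q V E \<longrightarrow>
            (\<forall>\<alpha> j. composition \<alpha> (card V) \<and> j < length \<alpha> \<and> length \<alpha> < j + 1 + q
                 \<and> \<alpha> ! j > 1 \<longrightarrow> zeta \<alpha> V E = 0))
       \<and> (connected_on V E \<longrightarrow>
            (\<forall>\<alpha>. composition \<alpha> (card V) \<and> \<alpha> \<noteq> [] \<and> last \<alpha> > 1 \<longrightarrow> zeta \<alpha> V E = 0))"
proof (intro conjI impI allI)
  fix \<alpha> j
  assume "1 \<le> q \<and> q_connected q V E"
    and "composition \<alpha> (card V) \<and> j < length \<alpha> \<and> length \<alpha> < j + 1 + q \<and> \<alpha> ! j > 1"
  thus "zeta \<alpha> V E = 0" using q_connected_zeta_eq_0 by blast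
next
  fix \<alpha>
  assume conn: "connected_on V E"
    and "composition \<alpha> (card V) \<and> \<alpha> \<noteq> [] \<and> last \<alpha> > 1"
  hence comp: "composition \<alpha> (card V)" and nonempty: "\<alpha> \<noteq> []" and last: "last \<alpha> > 1"
    by auto
  have "q_connected 1 V E"
    using connected_imp_1_connected[OF conn] composition_last_gt_1[OF comp nonempty last] .
  moreover have "length \<alpha> - 1 < length \<alpha>" "length \<alpha> < length \<alpha> - 1 + 1 + 1"
    using nonempty by simp_all
  moreover have "\<alpha> ! (length \<alpha> - 1) > 1" using nonempty last by (simp add: last_conv_nth)
  ultimately show "zeta \<alpha> V E = 0" by (rule q_connected_zeta_eq_0)
qed

end
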